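(* There exist graphs $G,H$ embedded in $\mathbb{R}^2$, each equipped with the height filtration, such that the FB-persistence diagrams of $G$ and $H$ differ, but the extended persistence diagrams of $G$ and $H$ coincide (in degrees $0$ and $1$).
   Context: Graphs are finite, undirected, possibly with multi-edges. For a graph embedded in $\mathbb{R}^2$, the height filtration is the vertex-based filtration function $f(v)=$ $y$-coordinate of $v$, $f(e)=\max(f(v),f(w))$ for $e=(v,w)$. For a filtration function $f$ with distinct values $a_0<\dots<a_n$, $G_{-1}=\emptyset$, $G_i=f^{-1}((-\infty,a_i])$; the intermediate complex $\mathrm{IC}_i(G,f)$ is the subgraph consisting of the vertices and edges of $G_i\setminus G_{i-1}$ together with endpoints of those edges. FB-persistence: the persistence diagrams (from the interval decomposition of $H_k(-;\mathbb{Z}/2)$, indexed by position) of $G_0\subset\dots\subset G_n=G\to Z_1\to\dots\to Z_{n+1}=\text{point}$, where $Z_1=G/\mathrm{IC}_n$ and $Z_{j+1}=Z_j/( *_j\cup\mathrm{IC}_{n-j})$, $*_j$ being the point to which previously contracted pieces were collapsed. Extended persistence: regard $G$ as a topological space and extend $f$ linearly along edges; set $G_a=\{x: f(x)\le a\}$, $G^a=\{x:f(x)\ge a\}$; the extended persistence diagrams are the persistence diagrams of $0\to H_k(G_{a_0})\to\dots\to H_k(G_{a_n})=H_k(G)\to H_k(G,G^{a_n})\to\dots\to H_k(G,G^{a_0})$ (maps induced by inclusions of spaces and pairs), $k=0,1$, with $\mathbb{Z}/2$ coefficients. *)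

theory Defs
  imports "HOL-Analysis.Analysis" "HOL-Library.Z2" "HOL-Library.Function_Algebras"
begin

section \<open>Finite graphs (multigraphs) and Z/2 cellular homology\<close>

text \<open>A finite undirected (multi)graph: vertex set, edge set, and the two endpoints of
  each edge.  The orientation of src/tgt is irrelevant since coefficients are Z/2.\<close>

record ('v,'e) graph =
  gV :: "'v set"
  gE :: "'e set"
  gsrc :: "'e \<Rightarrow> 'v"
  gtgt :: "'e \<Rightarrow> 'v"

definition wf_graph :: "('v,'e) graph \<Rightarrow> bool" where
  "wf_graph X \<longleftrightarrow> finite (gV X) \<and> finite (gE X) \<and>
     (\<forall>e\<in>gE X. gsrc X e \<in> gV X \<and> gtgt X e \<in> gV X)"

text \<open>A pair (X, L): a graph X together with a subgraph L given by its vertex and edge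
  sets.  Absolute homology of X is the case L = empty.\<close>

type_synonym ('v,'e) gpair = "('v,'e) graph \<times> 'v set \<times> 'e set"

definition pgraph :: "('v,'e) gpair \<Rightarrow> ('v,'e) graph" where "pgraph P = fst P"
definition pLV :: "('v,'e) gpair \<Rightarrow> 'v set" where "pLV P = fst (snd P)"
definition pLE :: "('v,'e) gpair \<Rightarrow> 'e set" where "pLE P = snd (snd P)"

definition z2scale :: "bit \<Rightarrow> ('c \<Rightarrow> bit) \<Rightarrow> ('c \<Rightarrow> bit)" where
  "z2scale a f = (\<lambda>x. a * f x)"

definition z2dim :: "('c \<Rightarrow> bit) set \<Rightarrow> nat" where
  "z2dim S = vector_space.dim z2scale S"

definition chains0 :: "('v,'e) gpair \<Rightarrow> ('v \<Rightarrow> bit) set" where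
  "chains0 P = {c. \<forall>v. c v \<noteq> 0 \<longrightarrow> v \<in> gV (pgraph P) - pLV P}"

definition chains1 :: "('v,'e) gpair \<Rightarrow> ('e \<Rightarrow> bit) set" where
  "chains1 P = {c. \<forall>e. c e \<noteq> 0 \<longrightarrow> e \<in> gE (pgraph P) - pLE P}"

definition incid :: "('v,'e) graph \<Rightarrow> 'v \<Rightarrow> 'e \<Rightarrow> bit" where
  "incid X v e = (if gsrc X e = v then 1 else 0) + (if gtgt X e = v then 1 else 0)"

definition bdry :: "('v,'e) gpair \<Rightarrow> ('e \<Rightarrow> bit) \<Rightarrow> ('v \<Rightarrow> bit)" where
  "bdry P c = (\<lambda>v. if v \<in> gV (pgraph P) - pLV P
                   then (\<Sum>e\<in>gE (pgraph P). c e * incid (pgraph P) v e) else 0)"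

text \<open>Cycles and boundaries (there are no 2-cells, so B_1 = 0 and Z_0 = C_0).\<close>

definition cycles0 :: "('v,'e) gpair \<Rightarrow> ('v \<Rightarrow> bit) set" where
  "cycles0 P = chains0 P"
definition bounds0 :: "('v,'e) gpair \<Rightarrow> ('v \<Rightarrow> bit) set" where
  "bounds0 P = bdry P ` chains1 P"
definition cycles1 :: "('v,'e) gpair \<Rightarrow> ('e \<Rightarrow> bit) set" where
  "cycles1 P = {c \<in> chains1 P. bdry P c = 0}"
definition bounds1 :: "('v,'e) gpair \<Rightarrow> ('e \<Rightarrow> bit) set" where
  "bounds1 P = {0}"

text \<open>A cellular map of graphs: a vertex map and an edge map, where an edge is either sent
  to an edge (Some) or collapsed to a vertex (None).  Induced chain maps between pairs.\<close>

type_synonym ('v,'e) cmap = "('v \<Rightarrow> 'v) \<times> ('e \<Rightarrow> 'e option)"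

definition chainmap0 :: "('v,'e) gpair \<Rightarrow> ('v,'e) gpair \<Rightarrow> ('v,'e) cmap
    \<Rightarrow> ('v \<Rightarrow> bit) \<Rightarrow> ('v \<Rightarrow> bit)" where
  "chainmap0 P Q m c = (\<lambda>w. if w \<in> gV (pgraph Q) - pLV Q
      then (\<Sum>v\<in>gV (pgraph P). if fst m v = w then c v else 0) else 0)"

definition chainmap1 :: "('v,'e) gpair \<Rightarrow> ('v,'e) gpair \<Rightarrow> ('v,'e) cmap
    \<Rightarrow> ('e \<Rightarrow> bit) \<Rightarrow> ('e \<Rightarrow> bit)" where
  "chainmap1 P Q m c = (\<lambda>e'. if e' \<in> gE (pgraph Q) - pLE Q
      then (\<Sum>e\<in>gE (pgraph P). if snd m e = Some e' then c e else 0) else 0)"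

fun compmap0 :: "(nat \<Rightarrow> ('v,'e) gpair) \<Rightarrow> (nat \<Rightarrow> ('v,'e) cmap) \<Rightarrow> nat \<Rightarrow> nat
    \<Rightarrow> ('v \<Rightarrow> bit) \<Rightarrow> ('v \<Rightarrow> bit)" where
  "compmap0 sp mp i 0 = id"
| "compmap0 sp mp i (Suc d) =
     chainmap0 (sp (i + d)) (sp (i + d + 1)) (mp (i + d)) \<circ> compmap0 sp mp i d"

fun compmap1 :: "(nat \<Rightarrow> ('v,'e) gpair) \<Rightarrow> (nat \<Rightarrow> ('v,'e) cmap) \<Rightarrow> nat \<Rightarrow> nat
    \<Rightarrow> ('e \<Rightarrow> bit) \<Rightarrow> ('e \<Rightarrow> bit)" where
  "compmap1 sp mp i 0 = id"
| "compmap1 sp mp i (Suc d) =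
     chainmap1 (sp (i + d)) (sp (i + d + 1)) (mp (i + d)) \<circ> compmap1 sp mp i d"

text \<open>Rank of the induced map H_k(sp i) \<rightarrow> H_k(sp j) (i \<le> j), with Z/2 coefficients:
  the dimension of (image of cycles + boundaries) / boundaries in the target.
  Homology vanishes in degrees \<ge> 2.\<close>

definition hrank :: "nat \<Rightarrow> (nat \<Rightarrow> ('v,'e) gpair) \<Rightarrow> (nat \<Rightarrow> ('v,'e) cmap)
    \<Rightarrow> nat \<Rightarrow> nat \<Rightarrow> nat" where
  "hrank k sp mp i j =
    (if k = 0 then
       z2dim (compmap0 sp mp i (j - i) ` cycles0 (sp i) \<union> bounds0 (sp j)) - z2dim (bounds0 (sp j))
     else if k = 1 then
       z2dim (compmap1 sp mp i (j - i) ` cycles1 (sp i) \<union> bounds1 (sp j)) - z2dim (bounds1 (sp j))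
     else 0)"

text \<open>Persistence diagram of the persistence module H_k(sp 0) \<rightarrow> ... \<rightarrow> H_k(sp N),
  indexed by position: the multiplicity of the interval [b,d] (0 \<le> b \<le> d \<le> N) in
  the interval decomposition, given by the rank (inclusion-exclusion) formula
  r(b,d) - r(b-1,d) - r(b,d+1) + r(b-1,d+1), out-of-range ranks being 0.\<close>

definition rk_ext :: "nat \<Rightarrow> (nat \<Rightarrow> ('v,'e) gpair) \<Rightarrow> (nat \<Rightarrow> ('v,'e) cmap) \<Rightarrow> nat
    \<Rightarrow> int \<Rightarrow> int \<Rightarrow> int" where
  "rk_ext k sp mp N i j =
     (if 0 \<le> i \<and> i \<le> j \<and> j \<le> int N then int (hrank k sp mp (nat i) (nat j)) else 0)"

definition pers_diagram :: "nat \<Rightarrow> (nat \<Rightarrow> ('v,'e) gpair) \<Rightarrow> (nat \<Rightarrow> ('v,'e) cmap) \<Rightarrow> nat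
    \<Rightarrow> nat \<times> nat \<Rightarrow> int" where
  "pers_diagram k sp mp N = (\<lambda>(b,d).
     if b \<le> d \<and> d \<le> N then
       rk_ext k sp mp N (int b) (int d) - rk_ext k sp mp N (int b - 1) (int d)
       - rk_ext k sp mp N (int b) (int d + 1) + rk_ext k sp mp N (int b - 1) (int d + 1)
     else 0)"

section \<open>Graphs embedded in the plane and the height filtration\<close>

definition embedding :: "('v,'e) graph \<Rightarrow> ('v \<Rightarrow> real \<times> real) \<Rightarrow> ('e \<Rightarrow> real \<Rightarrow> real \<times> real) \<Rightarrow> bool" where
  "embedding X pos arcs \<longleftrightarrow> wf_graph X \<and> gV X \<noteq> {} \<and> inj_on pos (gV X) \<and>
     (\<forall>e\<in>gE X. arc (arcs e) \<and> pathstart (arcs e) = pos (gsrc X e)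
                            \<and> pathfinish (arcs e) = pos (gtgt X e)) \<and>
     (\<forall>e\<in>gE X. \<forall>v\<in>gV X. pos v \<in> path_image (arcs e) \<longrightarrow> v = gsrc X e \<or> v = gtgt X e) \<and>
     (\<forall>e\<in>gE X. \<forall>e'\<in>gE X. e \<noteq> e' \<longrightarrow>
         path_image (arcs e) \<inter> path_image (arcs e') \<subseteq> pos ` gV X)"

definition hv :: "('v \<Rightarrow> real \<times> real) \<Rightarrow> 'v \<Rightarrow> real" where
  "hv pos v = snd (pos v)"

definition he :: "('v,'e) graph \<Rightarrow> ('v \<Rightarrow> real \<times> real) \<Rightarrow> 'e \<Rightarrow> real" where
  "he X pos e = max (hv pos (gsrc X e)) (hv pos (gtgt X e))"

definition fvals :: "('v,'e) graph \<Rightarrow> ('v \<Rightarrow> real \<times> real) \<Rightarrow> real list" where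
  "fvals X pos = sorted_list_of_set (hv pos ` gV X \<union> he X pos ` gE X)"

definition nlev :: "('v,'e) graph \<Rightarrow> ('v \<Rightarrow> real \<times> real) \<Rightarrow> nat" where
  "nlev X pos = length (fvals X pos) - 1"

definition aval :: "('v,'e) graph \<Rightarrow> ('v \<Rightarrow> real \<times> real) \<Rightarrow> nat \<Rightarrow> real" where
  "aval X pos i = fvals X pos ! i"

definition sublevel :: "('v,'e) graph \<Rightarrow> ('v \<Rightarrow> real \<times> real) \<Rightarrow> nat \<Rightarrow> ('v,'e) graph" where
  "sublevel X pos i = X\<lparr> gV := {v\<in>gV X. hv pos v \<le> aval X pos i},
                        gE := {e\<in>gE X. he X pos e \<le> aval X pos i} \<rparr>"

text \<open>Intermediate complex IC_i: the cells of G_i \<setminus> G_{i-1}, i.e. those with value a_i,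
  together with the endpoints of those edges (vertex set and edge set).\<close>

definition IC_V :: "('v,'e) graph \<Rightarrow> ('v \<Rightarrow> real \<times> real) \<Rightarrow> nat \<Rightarrow> 'v set" where
  "IC_V X pos i = {v\<in>gV X. hv pos v = aval X pos i}
      \<union> (\<Union>e\<in>{e\<in>gE X. he X pos e = aval X pos i}. {gsrc X e, gtgt X e})"

definition IC_E :: "('v,'e) graph \<Rightarrow> ('v \<Rightarrow> real \<times> real) \<Rightarrow> nat \<Rightarrow> 'e set" where
  "IC_E X pos i = {e\<in>gE X. he X pos e = aval X pos i}"

section \<open>FB-persistence\<close>

text \<open>Graphs with vertex type 'v option: Some v is an original vertex, None is the point
  to which contracted pieces are collapsed.\<close>

definition lift_graph :: "('v,'e) graph \<Rightarrow> ('v option,'e) graph" where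
  "lift_graph X = \<lparr> gV = Some ` gV X, gE = gE X,
                    gsrc = (\<lambda>e. Some (gsrc X e)), gtgt = (\<lambda>e. Some (gtgt X e)) \<rparr>"

text \<open>Quotient X / S of a graph by a subgraph S = (SV, SE): all vertices in SV are
  identified to the point None, edges in SE are removed (collapsed).\<close>

definition qvert :: "'v option set \<Rightarrow> 'v option \<Rightarrow> 'v option" where
  "qvert SV x = (if x \<in> SV then None else x)"

definition qedge :: "'e set \<Rightarrow> 'e \<Rightarrow> 'e option" where
  "qedge SE e = (if e \<in> SE then None else Some e)"

definition quot_graph :: "('v option,'e) graph \<Rightarrow> 'v option set \<Rightarrow> 'e set \<Rightarrow> ('v option,'e) graph" where
  "quot_graph X SV SE = \<lparr> gV = (gV X - SV) \<union> {None}, gE = gE X - SE,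
       gsrc = (\<lambda>e. qvert SV (gsrc X e)), gtgt = (\<lambda>e. qvert SV (gtgt X e)) \<rparr>"

text \<open>The subgraph *_j \<union> IC_{n-j} collapsed at step j (for j = 0 this is IC_n; adding
  the not-yet-present point None is harmless).\<close>

definition FB_SV :: "('v,'e) graph \<Rightarrow> ('v \<Rightarrow> real \<times> real) \<Rightarrow> nat \<Rightarrow> 'v option set" where
  "FB_SV X pos j = insert None (Some ` IC_V X pos (nlev X pos - j))"

definition FB_SE :: "('v,'e) graph \<Rightarrow> ('v \<Rightarrow> real \<times> real) \<Rightarrow> nat \<Rightarrow> 'e set" where
  "FB_SE X pos j = IC_E X pos (nlev X pos - j)"

fun Zq :: "('v,'e) graph \<Rightarrow> ('v \<Rightarrow> real \<times> real) \<Rightarrow> nat \<Rightarrow> ('v option,'e) graph" where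
  "Zq X pos 0 = lift_graph X"
| "Zq X pos (Suc j) = quot_graph (Zq X pos j) (FB_SV X pos j) (FB_SE X pos j)"

text \<open>The FB sequence G_0 \<subseteq> ... \<subseteq> G_n = G \<rightarrow> Z_1 \<rightarrow> ... \<rightarrow> Z_{n+1}, at positions
  0..2n+1 (absolute homology: empty subgraph), with inclusions and quotient maps.\<close>

definition FB_space :: "('v,'e) graph \<Rightarrow> ('v \<Rightarrow> real \<times> real) \<Rightarrow> nat \<Rightarrow> ('v option,'e) gpair" where
  "FB_space X pos t =
     (if t \<le> nlev X pos then (lift_graph (sublevel X pos t), {}, {})
      else (Zq X pos (t - nlev X pos), {}, {}))"

definition FB_map :: "('v,'e) graph \<Rightarrow> ('v \<Rightarrow> real \<times> real) \<Rightarrow> nat \<Rightarrow> ('v option,'e) cmap" where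
  "FB_map X pos t =
     (if t < nlev X pos then (id, Some)
      else (qvert (FB_SV X pos (t - nlev X pos)), qedge (FB_SE X pos (t - nlev X pos))))"

definition FB_diagram :: "nat \<Rightarrow> ('v,'e) graph \<Rightarrow> ('v \<Rightarrow> real \<times> real) \<Rightarrow> nat \<times> nat \<Rightarrow> int" where
  "FB_diagram k X pos =
     pers_diagram k (FB_space X pos) (FB_map X pos) (2 * nlev X pos + 1)"

section \<open>Extended persistence\<close>

text \<open>Combinatorial models of the sublevel set G_a = {x. f x \<le> a_i} and superlevel set
  G^a = {x. f x \<ge> a_i} of the linearly extended f (their deformation retracts):
  the sublevel subgraph G_i, and the full subgraph on the vertices with f \<ge> a_i.\<close>

definition superV :: "('v,'e) graph \<Rightarrow> ('v \<Rightarrow> real \<times> real) \<Rightarrow> nat \<Rightarrow> 'v set" where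
  "superV X pos i = {v\<in>gV X. hv pos v \<ge> aval X pos i}"

definition superE :: "('v,'e) graph \<Rightarrow> ('v \<Rightarrow> real \<times> real) \<Rightarrow> nat \<Rightarrow> 'e set" where
  "superE X pos i = {e\<in>gE X. hv pos (gsrc X e) \<ge> aval X pos i \<and> hv pos (gtgt X e) \<ge> aval X pos i}"

text \<open>H(G_{a_0}) \<rightarrow> ... \<rightarrow> H(G_{a_n}) = H(G) \<rightarrow> H(G,G^{a_n}) \<rightarrow> ... \<rightarrow> H(G,G^{a_0}),
  positions 0..2n+1; all maps induced by inclusions.\<close>

definition EP_space :: "('v,'e) graph \<Rightarrow> ('v \<Rightarrow> real \<times> real) \<Rightarrow> nat \<Rightarrow> ('v,'e) gpair" where
  "EP_space X pos t =
     (if t \<le> nlev X pos then (sublevel X pos t, {}, {})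
      else (X, superV X pos (2 * nlev X pos + 1 - t), superE X pos (2 * nlev X pos + 1 - t)))"

definition EP_map :: "('v,'e) graph \<Rightarrow> ('v \<Rightarrow> real \<times> real) \<Rightarrow> nat \<Rightarrow> ('v,'e) cmap" where
  "EP_map X pos t = (id, Some)"

definition EP_diagram :: "nat \<Rightarrow> ('v,'e) graph \<Rightarrow> ('v \<Rightarrow> real \<times> real) \<Rightarrow> nat \<times> nat \<Rightarrow> int" where
  "EP_diagram k X pos =
     pers_diagram k (EP_space X pos) (EP_map X pos) (2 * nlev X pos + 1)"

end

(*
  Both graphs are trees with their lowest vertices at height 0 and two leaves at height 1:
  V is a wedge of two edges rising from one vertex, U a horizontal edge with a vertical edge
  rising from each end.  Extended persistence only sees sublevel and superlevel sets; in both
  graphs these are contractible below the top, and the top superlevel set is two points.  So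
  both have one H_0 class living through the ordinary part and one relative H_1 class, born at
  H_1(G, G^{a_1}) and killed at H_1(G, G^{a_0}) = 0.

  FB-persistence collapses intermediate complexes instead.  In U, IC_1 is the two vertical
  edges together with all four vertices, so collapsing it turns the bottom edge into a loop and
  Z_1 has H_1 = Z/2; in V, IC_1 is all of V and Z_1 is a point.  Hence the degree 1
  FB-diagrams differ at (2,2).
*)
theory Submission
  imports Defs
begin

section \<open>Linear algebra over Z/2\<close>

(* Keep the field operations of bit instead of rewriting them to bitwise operations. *)
declare add_bit_eq_xor [simp del] mult_bit_eq_and [simp del]

lemma bit_add_self [simp]: "(x::bit) + x = 0"
  by (cases x) auto

interpretation Z: vector_space z2scale
  by unfold_locales (auto simp: z2scale_def fun_eq_iff algebra_simps)

abbreviation z2_linear :: "(('a \<Rightarrow> bit) \<Rightarrow> ('b \<Rightarrow> bit)) \<Rightarrow> bool" where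
  "z2_linear \<equiv> Vector_Spaces.linear z2scale z2scale"

lemma z2scale_0 [simp]: "z2scale 0 x = 0" and z2scale_1 [simp]: "z2scale 1 x = x"
  by (auto simp: z2scale_def fun_eq_iff)

lemma z2_linear_if_additive:
  assumes "\<And>x y. f (x + y) = f x + f y"
  shows "z2_linear f"
proof
  have "f 0 = 0" using assms[of 0 0] by simp
  then show "f (z2scale r x) = z2scale r (f x)" for r x
    by (cases r) auto
qed (rule assms)

lemma z2_span_image: "z2_linear f \<Longrightarrow> f ` Z.span S = Z.span (f ` S)"
  by (simp add: Vector_Spaces.linear_iff_module_hom module_hom.span_image)

lemma sum_fun_apply: "(\<Sum>i\<in>A. f i) x = (\<Sum>i\<in>A. (f i x :: bit))"
  by (induct A rule: infinite_finite_induct) auto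

definition delta :: "'a \<Rightarrow> 'a \<Rightarrow> bit" where
  "delta x = (\<lambda>y. if y = x then 1 else 0)"

definition supported_on :: "'a set \<Rightarrow> ('a \<Rightarrow> bit) set" where
  "supported_on S = {c. \<forall>x. x \<notin> S \<longrightarrow> c x = 0}"

lemma subspace_supported_on: "Z.subspace (supported_on S)"
  unfolding Z.subspace_def supported_on_def z2scale_def by auto

lemma supported_on_mono: "S \<subseteq> T \<Longrightarrow> supported_on S \<subseteq> supported_on T"
  by (auto simp: supported_on_def)

lemma supported_on_eq_span:
  assumes "finite S"
  shows "supported_on S = Z.span (delta ` S)"
proof
  show "supported_on S \<subseteq> Z.span (delta ` S)"
  proof
    fix c assume c: "c \<in> supported_on S"
    have "c = (\<Sum>x\<in>S. z2scale (c x) (delta x))"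
    proof
      fix y
      have "(\<Sum>x\<in>S. z2scale (c x) (delta x)) y = (\<Sum>x\<in>S. if x = y then c x else 0)"
        unfolding sum_fun_apply by (rule sum.cong) (auto simp: z2scale_def delta_def)
      then show "c y = (\<Sum>x\<in>S. z2scale (c x) (delta x)) y"
        using c assms by (auto simp: supported_on_def)
    qed
    also have "\<dots> \<in> Z.span (delta ` S)"
      by (intro Z.span_sum Z.span_scale Z.span_base) auto
    finally show "c \<in> Z.span (delta ` S)" .
  qed
  show "Z.span (delta ` S) \<subseteq> supported_on S"
    by (rule Z.span_minimal[OF _ subspace_supported_on]) (auto simp: supported_on_def delta_def)
qed

lemma coords_eq_iff:
  "v \<in> supported_on (set ds) \<Longrightarrow> w \<in> supported_on (set ds) \<Longrightarrow> map v ds = map w ds \<longleftrightarrow> v = w"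
  by (auto simp: supported_on_def fun_eq_iff)

fun span_list :: "('a \<Rightarrow> bit) list \<Rightarrow> ('a \<Rightarrow> bit) list" where
  "span_list [] = [0]"
| "span_list (b # bs) = span_list bs @ map ((+) b) (span_list bs)"

lemma set_span_list: "set (span_list bs) = Z.span (set bs)"
proof (induction bs)
  case (Cons b bs)
  have "x \<in> Z.span (insert b (set bs)) \<longleftrightarrow> x \<in> Z.span (set bs) \<or> x - b \<in> Z.span (set bs)" for x
  proof -
    have "(\<exists>k. x - z2scale k b \<in> Z.span (set bs)) \<longleftrightarrow> x \<in> Z.span (set bs) \<or> x - b \<in> Z.span (set bs)"
    proof
      assume "\<exists>k. x - z2scale k b \<in> Z.span (set bs)"
      then obtain k where "x - z2scale k b \<in> Z.span (set bs)" ..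
      then show "x \<in> Z.span (set bs) \<or> x - b \<in> Z.span (set bs)"
        by (cases k) simp_all
    next
      assume "x \<in> Z.span (set bs) \<or> x - b \<in> Z.span (set bs)"
      then show "\<exists>k. x - z2scale k b \<in> Z.span (set bs)"
        by (metis diff_zero z2scale_0 z2scale_1)
    qed
    then show ?thesis
      by (simp add: Z.span_insert)
  qed
  moreover have "x - b \<in> Z.span (set bs) \<longleftrightarrow> x \<in> (+) b ` Z.span (set bs)" for x
    by (force simp: algebra_simps)
  ultimately show ?case
    using Cons.IH by auto
qed simp

lemma z2_dim_empty [simp]: "Z.dim {} = 0"
  by (simp add: Z.dim_eq_card_independent Z.independent_empty)

lemma z2_dim_insert:
  assumes "finite S"
  shows "Z.dim (insert x S) = (if x \<in> Z.span S then Z.dim S else Suc (Z.dim S))"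
proof (cases "x \<in> Z.span S")
  case True
  then show ?thesis
    by (metis Z.span_eq_dim Z.span_redundant)
next
  case False
  obtain B where B: "B \<subseteq> S" "Z.independent B" "S \<subseteq> Z.span B" "card B = Z.dim S"
    using Z.basis_exists by blast
  have x: "x \<notin> Z.span B"
    using False B(1) Z.span_mono by blast
  have "Z.dim (insert x S) = Suc (card B)"
  proof (rule Z.dim_unique)
    show "insert x B \<subseteq> insert x S"
      using B(1) by blast
    show "insert x S \<subseteq> Z.span (insert x B)"
      using B(3) Z.span_mono[of B "insert x B"] by (auto intro: Z.span_base)
    show "Z.independent (insert x B)"
      using x B(2) by (rule Z.independent_insertI)
    show "card (insert x B) = Suc (card B)"
      using x finite_subset[OF B(1) assms] Z.span_base[of x B] by (auto simp: card_insert_if)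
  qed
  then show ?thesis
    using False B(4) by simp
qed

lemma dim_span_Un: "Z.dim (Z.span A \<union> Z.span B) = Z.dim (A \<union> B)"
proof (rule Z.span_eq_dim)
  show "Z.span (Z.span A \<union> Z.span B) = Z.span (A \<union> B)"
    by (intro subset_antisym Z.span_minimal Z.span_mono)
       (auto intro: Z.span_mono[THEN subsetD] Z.span_superset[THEN subsetD])
qed

fun bits_span :: "nat \<Rightarrow> bit list list \<Rightarrow> bit list list" where
  "bits_span n [] = [replicate n 0]"
| "bits_span n (b # bs) = bits_span n bs @ map (map2 (+) b) (bits_span n bs)"

fun greedy_rank :: "bit list list \<Rightarrow> bit list list \<Rightarrow> nat" where
  "greedy_rank B [] = length B"
| "greedy_rank B (x # xs) =
     (if x \<in> set (bits_span (length x) B) then greedy_rank B xs else greedy_rank (x # B) xs)"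

text \<open>Vectors supported on the list ds are compared via their coordinate lists, on which
  simp can compute; only spans of the independent vectors kept so far are enumerated.\<close>

definition list_rank :: "'a list \<Rightarrow> ('a \<Rightarrow> bit) list \<Rightarrow> nat" where
  "list_rank ds vs = greedy_rank [] (map (\<lambda>v. map v ds) vs)"

lemma bits_span_coords:
  "bits_span (length ds) (map (\<lambda>v. map v ds) bs) = map (\<lambda>v. map v ds) (span_list bs)"
proof (induction bs)
  case Nil
  show ?case
    by (induction ds) simp_all
next
  case (Cons b bs)
  have "map2 (+) (map b ds) (map x ds) = map (b + x) ds" for x :: "'a \<Rightarrow> bit"
    by (induction ds) simp_all
  with Cons.IH show ?case
    by (simp add: comp_def)
qed

lemma coords_mem_bits_span_iff:
  assumes "set B \<subseteq> supported_on (set ds)" "v \<in> supported_on (set ds)"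
  shows "map v ds \<in> set (bits_span (length ds) (map (\<lambda>v. map v ds) B)) \<longleftrightarrow> v \<in> Z.span (set B)"
proof -
  have sub: "Z.span (set B) \<subseteq> supported_on (set ds)"
    using assms(1) by (intro Z.span_minimal subspace_supported_on)
  have "map v ds \<in> (\<lambda>v. map v ds) ` Z.span (set B) \<longleftrightarrow> v \<in> Z.span (set B)"
  proof
    assume "map v ds \<in> (\<lambda>v. map v ds) ` Z.span (set B)"
    then obtain w where w: "w \<in> Z.span (set B)" "map v ds = map w ds"
      by auto
    then have "v = w"
      using coords_eq_iff[OF assms(2)] sub by blast
    with w show "v \<in> Z.span (set B)"
      by simp
  qed auto
  then show ?thesis
    unfolding bits_span_coords set_map set_span_list .
qed

lemma greedy_rank_coords:
  assumes "set B \<union> set T \<subseteq> supported_on (set ds)" "Z.independent (set B)" "distinct B"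
  shows "greedy_rank (map (\<lambda>v. map v ds) B) (map (\<lambda>v. map v ds) T) = Z.dim (set B \<union> set T)"
  using assms
proof (induction T arbitrary: B)
  case Nil
  then show ?case
    by (simp add: Z.dim_eq_card_independent distinct_card)
next
  case (Cons v T)
  then have test: "map v ds \<in> set (bits_span (length ds) (map (\<lambda>v. map v ds) B))
      \<longleftrightarrow> v \<in> Z.span (set B)"
    by (intro coords_mem_bits_span_iff) auto
  show ?case
  proof (cases "v \<in> Z.span (set B)")
    case True
    then have "v \<in> Z.span (set B \<union> set T)"
      using Z.span_mono[of "set B"] by blast
    with True test Cons show ?thesis
      by (simp add: z2_dim_insert)
  next
    case False
    then have "Z.independent (set (v # B))" "distinct (v # B)"
      using Cons.prems Z.independent_insertI Z.span_base by auto
    with False test Cons.IH[of "v # B"] Cons.prems(1) show ?thesis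
      by simp
  qed
qed

lemma dim_eq_list_rank: "set vs \<subseteq> supported_on (set ds) \<Longrightarrow> Z.dim (set vs) = list_rank ds vs"
  using greedy_rank_coords[of "[]" vs ds] by (simp add: list_rank_def Z.independent_empty)

section \<open>Ranks of maps in homology\<close>

lemma pgraph_simps [simp]: "pgraph (X, LV, LE) = X" "pLV (X, LV, LE) = LV" "pLE (X, LV, LE) = LE"
  by (simp_all add: pgraph_def pLV_def pLE_def)

lemma z2_linear_chainmap0: "z2_linear (chainmap0 P Q m)"
  by (rule z2_linear_if_additive)
     (auto simp: chainmap0_def fun_eq_iff sum.distrib[symmetric] intro!: sum.cong)

lemma z2_linear_chainmap1: "z2_linear (chainmap1 P Q m)"
  by (rule z2_linear_if_additive)
     (auto simp: chainmap1_def fun_eq_iff sum.distrib[symmetric] intro!: sum.cong)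

lemma z2_linear_bdry: "z2_linear (bdry P)"
  by (rule z2_linear_if_additive)
     (auto simp: bdry_def fun_eq_iff sum.distrib[symmetric] distrib_right intro!: sum.cong)

lemma z2_linear_compmap0: "z2_linear (compmap0 sp mp i d)"
  by (induction d)
     (simp_all only: compmap0.simps Z.linear_id Vector_Spaces.linear_compose[OF _ z2_linear_chainmap0])

lemma z2_linear_compmap1: "z2_linear (compmap1 sp mp i d)"
  by (induction d)
     (simp_all only: compmap1.simps Z.linear_id Vector_Spaces.linear_compose[OF _ z2_linear_chainmap1])

lemma chains0_eq_supported_on: "chains0 P = supported_on (gV (pgraph P) - pLV P)"
  by (auto simp: chains0_def supported_on_def)

lemma chains1_eq_supported_on: "chains1 P = supported_on (gE (pgraph P) - pLE P)"
  by (auto simp: chains1_def supported_on_def)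

lemma bdry_supported_on: "bdry P c \<in> supported_on (gV (pgraph P))"
  by (auto simp: bdry_def supported_on_def)

lemma compmap0_supported_on:
  assumes "\<And>t. gV (pgraph (sp t)) \<subseteq> A" and "c \<in> supported_on A"
  shows "compmap0 sp mp i d c \<in> supported_on A"
proof (cases d)
  case (Suc d')
  have "compmap0 sp mp i d c \<in> supported_on (gV (pgraph (sp (i + d' + 1))))"
    by (auto simp: Suc chainmap0_def supported_on_def)
  then show ?thesis
    using supported_on_mono[OF assms(1)] by blast
qed (use assms in simp)

lemma compmap1_supported_on:
  assumes "\<And>t. gE (pgraph (sp t)) \<subseteq> A" and "c \<in> supported_on A"
  shows "compmap1 sp mp i d c \<in> supported_on A"
proof (cases d)
  case (Suc d')
  have "compmap1 sp mp i d c \<in> supported_on (gE (pgraph (sp (i + d' + 1))))"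
    by (auto simp: Suc chainmap1_def supported_on_def)
  then show ?thesis
    using supported_on_mono[OF assms(1)] by blast
qed (use assms in simp)

lemma hrank0_eq_list_rank:
  fixes sp :: "nat \<Rightarrow> ('v,'e) gpair"
  assumes V: "\<And>t. gV (pgraph (sp t)) \<subseteq> set vds"
    and E: "\<And>t. gE (pgraph (sp t)) \<subseteq> set eds"
  shows "hrank 0 sp mp i j =
    list_rank vds
      (map (compmap0 sp mp i (j - i) \<circ> delta) [v\<leftarrow>vds. v \<in> gV (pgraph (sp i)) - pLV (sp i)]
       @ map (bdry (sp j) \<circ> delta) [e\<leftarrow>eds. e \<in> gE (pgraph (sp j)) - pLE (sp j)])
    - list_rank vds (map (bdry (sp j) \<circ> delta) [e\<leftarrow>eds. e \<in> gE (pgraph (sp j)) - pLE (sp j)])"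
proof -
  define vs where "vs = [v\<leftarrow>vds. v \<in> gV (pgraph (sp i)) - pLV (sp i)]"
  define es where "es = [e\<leftarrow>eds. e \<in> gE (pgraph (sp j)) - pLE (sp j)]"
  let ?f = "compmap0 sp mp i (j - i)"
  have "cycles0 (sp i) = supported_on (set vs)"
    using V[of i]
    by (auto simp: vs_def cycles0_def chains0_eq_supported_on intro!: arg_cong[where f = supported_on])
  then have img: "?f ` cycles0 (sp i) = Z.span (set (map (?f \<circ> delta) vs))"
    by (simp add: supported_on_eq_span z2_span_image[OF z2_linear_compmap0] image_comp)
  have "chains1 (sp j) = supported_on (set es)"
    using E[of j]
    by (auto simp: es_def chains1_eq_supported_on intro!: arg_cong[where f = supported_on])
  then have bnd: "bounds0 (sp j) = Z.span (set (map (bdry (sp j) \<circ> delta) es))"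
    by (simp add: bounds0_def supported_on_eq_span z2_span_image[OF z2_linear_bdry] image_comp)
  have "delta v \<in> supported_on (set vds)" if "v \<in> set vs" for v
    using that by (auto simp: vs_def delta_def supported_on_def)
  then have "set (map (?f \<circ> delta) vs) \<subseteq> supported_on (set vds)"
    using compmap0_supported_on[OF V] by auto
  moreover have bnd_sub: "set (map (bdry (sp j) \<circ> delta) es) \<subseteq> supported_on (set vds)"
    using bdry_supported_on[of "sp j"] supported_on_mono[OF V[of j]] by auto
  ultimately have "Z.dim (set (map (?f \<circ> delta) vs @ map (bdry (sp j) \<circ> delta) es))
      = list_rank vds (map (?f \<circ> delta) vs @ map (bdry (sp j) \<circ> delta) es)"
    by (intro dim_eq_list_rank) auto
  then show ?thesis
    unfolding hrank_def z2dim_def img bnd dim_span_Un Z.dim_span vs_def[symmetric] es_def[symmetric]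
    using dim_eq_list_rank[OF bnd_sub] by simp
qed

lemma hrank1_eq_list_rank:
  fixes sp :: "nat \<Rightarrow> ('v,'e) gpair"
  assumes V: "\<And>t. gV (pgraph (sp t)) \<subseteq> set vds"
    and E: "\<And>t. gE (pgraph (sp t)) \<subseteq> set eds"
  shows "hrank 1 sp mp i j =
    list_rank eds (map (compmap1 sp mp i (j - i))
      [c\<leftarrow>span_list (map delta [e\<leftarrow>eds. e \<in> gE (pgraph (sp i)) - pLE (sp i)]).
         \<forall>v\<in>set vds. bdry (sp i) c v = 0])"
proof -
  define es where "es = [e\<leftarrow>eds. e \<in> gE (pgraph (sp i)) - pLE (sp i)]"
  define cs where "cs = [c\<leftarrow>span_list (map delta es). \<forall>v\<in>set vds. bdry (sp i) c v = 0]"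
  let ?f = "compmap1 sp mp i (j - i)"
  have "set es = gE (pgraph (sp i)) - pLE (sp i)"
    using E[of i] by (auto simp: es_def)
  then have chains: "chains1 (sp i) = set (span_list (map delta es))"
    unfolding chains1_eq_supported_on set_span_list set_map
    by (metis finite_set supported_on_eq_span)
  have "bdry (sp i) c = 0 \<longleftrightarrow> (\<forall>v\<in>set vds. bdry (sp i) c v = 0)" for c
    using bdry_supported_on[of "sp i" c] V[of i] by (auto simp: supported_on_def fun_eq_iff)
  then have "cycles1 (sp i) = set cs"
    by (auto simp: cycles1_def chains cs_def)
  moreover have "set (map ?f cs) \<subseteq> supported_on (set eds)"
  proof -
    have "set cs \<subseteq> chains1 (sp i)"
      using chains by (auto simp: cs_def)
    also have "\<dots> \<subseteq> supported_on (set eds)"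
      unfolding chains1_eq_supported_on using E[of i] by (intro supported_on_mono) auto
    finally have "set cs \<subseteq> supported_on (set eds)" .
    then show ?thesis
      by (auto intro: compmap1_supported_on[OF E])
  qed
  ultimately show ?thesis
    unfolding hrank_def z2dim_def bounds1_def cs_def[symmetric] es_def[symmetric]
    by (simp add: z2_dim_insert Z.span_zero dim_eq_list_rank flip: set_map)
qed

lemma pers_diagram_cong:
  assumes "\<And>i j. i \<le> j \<Longrightarrow> j \<le> N \<Longrightarrow> hrank k sp mp i j = hrank k sp' mp' i j"
  shows "pers_diagram k sp mp N = pers_diagram k sp' mp' N"
proof -
  have "rk_ext k sp mp N = rk_ext k sp' mp' N"
    by (intro ext) (auto simp: rk_ext_def nat_le_iff intro!: assms nat_mono)
  then show ?thesis
    unfolding pers_diagram_def by (simp only:)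
qed

lemma pers_diagram_interior:
  assumes "0 < b" "b \<le> d" "d < N"
  shows "pers_diagram k sp mp N (b, d) =
    int (hrank k sp mp b d) - int (hrank k sp mp (b - 1) d)
    - int (hrank k sp mp b (d + 1)) + int (hrank k sp mp (b - 1) (d + 1))"
  using assms nat_int_add[of d 1] by (simp add: pers_diagram_def rk_ext_def nat_diff_distrib')

(* Let the recursive definitions unfold at numerals, which simp does not rewrite to Suc. *)
lemma compmap0_numeral [simp]:
  "compmap0 sp mp i (numeral n) =
     chainmap0 (sp (i + pred_numeral n)) (sp (i + pred_numeral n + 1)) (mp (i + pred_numeral n))
     \<circ> compmap0 sp mp i (pred_numeral n)"
  by (simp add: numeral_eq_Suc)

lemma compmap1_numeral [simp]:
  "compmap1 sp mp i (numeral n) =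
     chainmap1 (sp (i + pred_numeral n)) (sp (i + pred_numeral n + 1)) (mp (i + pred_numeral n))
     \<circ> compmap1 sp mp i (pred_numeral n)"
  by (simp add: numeral_eq_Suc)

lemma Zq_numeral [simp]:
  "Zq X pos (numeral n) =
     quot_graph (Zq X pos (pred_numeral n)) (FB_SV X pos (pred_numeral n)) (FB_SE X pos (pred_numeral n))"
  by (simp add: numeral_eq_Suc)

lemma EP_space_subgraph:
  "gV (pgraph (EP_space X pos t)) \<subseteq> gV X" "gE (pgraph (EP_space X pos t)) \<subseteq> gE X"
  by (auto simp: EP_space_def sublevel_def pgraph_def)

lemma Zq_subgraph:
  "gV (Zq X pos j) \<subseteq> insert None (Some ` gV X)" "gE (Zq X pos j) \<subseteq> gE X"
  by (induction j) (auto simp: lift_graph_def quot_graph_def)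

lemma FB_space_subgraph:
  "gV (pgraph (FB_space X pos t)) \<subseteq> insert None (Some ` gV X)"
  "gE (pgraph (FB_space X pos t)) \<subseteq> gE X"
  by (auto simp: FB_space_def sublevel_def pgraph_def lift_graph_def dest: Zq_subgraph[THEN subsetD])

lemma IC_V_eq:
  "IC_V X pos i =
     {v \<in> gV X. hv pos v = aval X pos i} \<union> (\<Union>e\<in>IC_E X pos i. {gsrc X e, gtgt X e})"
  by (simp add: IC_V_def IC_E_def)

section \<open>The two example graphs\<close>

definition straight_arcs ::
    "('v,'e) graph \<Rightarrow> ('v \<Rightarrow> real \<times> real) \<Rightarrow> 'e \<Rightarrow> real \<Rightarrow> real \<times> real" where
  "straight_arcs X pos e = linepath (pos (gsrc X e)) (pos (gtgt X e))"

lemma closed_segment_pair_iff: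
  "p \<in> closed_segment (a1::real, a2::real) (b1, b2) \<longleftrightarrow>
   (\<exists>u. 0 \<le> u \<and> u \<le> 1 \<and> fst p = (1 - u) * a1 + u * b1 \<and> snd p = (1 - u) * a2 + u * b2)"
  by (cases p) (auto simp: closed_segment_def)

definition graph_V :: "(nat, nat) graph" where
  "graph_V = \<lparr>gV = {0,1,2}, gE = {0,1}, gsrc = (\<lambda>e. 0), gtgt = (\<lambda>e. if e = 0 then 1 else 2)\<rparr>"

definition pos_V :: "nat \<Rightarrow> real \<times> real" where
  "pos_V v = (if v = 0 then (0,0) else if v = 1 then (-1,1) else (1,1))"

definition graph_U :: "(nat, nat) graph" where
  "graph_U = \<lparr>gV = {0,1,2,3}, gE = {0,1,2}, gsrc = (\<lambda>e. if e = 2 then 1 else 0),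
              gtgt = (\<lambda>e. if e = 0 then 1 else if e = 1 then 2 else 3)\<rparr>"

definition pos_U :: "nat \<Rightarrow> real \<times> real" where
  "pos_U v = (if v = 0 then (0,0) else if v = 1 then (1,0) else if v = 2 then (0,1) else (1,1))"

lemma graph_V_simps [simp]:
  "gV graph_V = {0,1,2}" "gE graph_V = {0,1}" "gsrc graph_V = (\<lambda>e. 0)"
  "gtgt graph_V = (\<lambda>e. if e = 0 then 1 else 2)"
  by (simp_all add: graph_V_def)

lemma graph_U_simps [simp]:
  "gV graph_U = {0,1,2,3}" "gE graph_U = {0,1,2}" "gsrc graph_U = (\<lambda>e. if e = 2 then 1 else 0)"
  "gtgt graph_U = (\<lambda>e. if e = 0 then 1 else if e = 1 then 2 else 3)"
  by (simp_all add: graph_U_def)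

lemma embedding_V: "embedding graph_V pos_V (straight_arcs graph_V pos_V)"
proof -
  have "path_image (straight_arcs graph_V pos_V e) \<inter> path_image (straight_arcs graph_V pos_V e')
      \<subseteq> {pos_V 0}" if "e \<in> gE graph_V" "e' \<in> gE graph_V" "e \<noteq> e'" for e e'
    using that by (auto simp: straight_arcs_def pos_V_def closed_segment_pair_iff prod_eq_iff)
  then show ?thesis
    unfolding embedding_def wf_graph_def
    by (fastforce simp: straight_arcs_def inj_on_def pos_V_def arc_linepath closed_segment_pair_iff)
qed

lemma embedding_U: "embedding graph_U pos_U (straight_arcs graph_U pos_U)"
proof -
  have "path_image (straight_arcs graph_U pos_U e) \<inter> path_image (straight_arcs graph_U pos_U e')
      \<subseteq> {pos_U 0, pos_U 1}" if "e \<in> gE graph_U" "e' \<in> gE graph_U" "e \<noteq> e'" for e e'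
    using that by (auto simp: straight_arcs_def pos_U_def closed_segment_pair_iff prod_eq_iff)
  then show ?thesis
    unfolding embedding_def wf_graph_def
    by (fastforce simp: straight_arcs_def inj_on_def pos_U_def arc_linepath closed_segment_pair_iff)
qed

lemma fvals_V: "fvals graph_V pos_V = [0, 1]"
proof -
  have "hv pos_V ` gV graph_V \<union> he graph_V pos_V ` gE graph_V = {0, 1}"
    by (auto simp: hv_def he_def pos_V_def)
  then show ?thesis
    by (simp add: fvals_def)
qed

lemma fvals_U: "fvals graph_U pos_U = [0, 1]"
proof -
  have "hv pos_U ` gV graph_U \<union> he graph_U pos_U ` gE graph_U = {0, 1}"
    by (auto simp: hv_def he_def pos_U_def)
  then show ?thesis
    by (simp add: fvals_def)
qed

(* Stated with Suc 0 since simp rewrites (1::nat) to Suc 0. *)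
lemma levels_V [simp]:
  "nlev graph_V pos_V = 1" "aval graph_V pos_V 0 = 0" "aval graph_V pos_V (Suc 0) = 1"
  by (simp_all add: nlev_def aval_def fvals_V)

lemma levels_U [simp]:
  "nlev graph_U pos_U = 1" "aval graph_U pos_U 0 = 0" "aval graph_U pos_U (Suc 0) = 1"
  by (simp_all add: nlev_def aval_def fvals_U)

lemma sublevel_V [simp]:
  "sublevel graph_V pos_V 0 = graph_V\<lparr>gV := {0}, gE := {}\<rparr>"
  "sublevel graph_V pos_V (Suc 0) = graph_V"
proof -
  have "{v \<in> gV graph_V. hv pos_V v \<le> 0} = {0}" "{e \<in> gE graph_V. he graph_V pos_V e \<le> 0} = {}"
    "{v \<in> gV graph_V. hv pos_V v \<le> 1} = gV graph_V"
    "{e \<in> gE graph_V. he graph_V pos_V e \<le> 1} = gE graph_V"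
    by (auto simp: hv_def he_def pos_V_def)
  then show "sublevel graph_V pos_V 0 = graph_V\<lparr>gV := {0}, gE := {}\<rparr>"
    "sublevel graph_V pos_V (Suc 0) = graph_V"
    by (simp_all add: sublevel_def)
qed

lemma sublevel_U [simp]:
  "sublevel graph_U pos_U 0 = graph_U\<lparr>gV := {0,1}, gE := {0}\<rparr>"
  "sublevel graph_U pos_U (Suc 0) = graph_U"
proof -
  have "{v \<in> gV graph_U. hv pos_U v \<le> 0} = {0,1}" "{e \<in> gE graph_U. he graph_U pos_U e \<le> 0} = {0}"
    "{v \<in> gV graph_U. hv pos_U v \<le> 1} = gV graph_U"
    "{e \<in> gE graph_U. he graph_U pos_U e \<le> 1} = gE graph_U"
    by (auto simp: hv_def he_def pos_U_def)
  then show "sublevel graph_U pos_U 0 = graph_U\<lparr>gV := {0,1}, gE := {0}\<rparr>"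
    "sublevel graph_U pos_U (Suc 0) = graph_U"
    by (simp_all add: sublevel_def)
qed

lemma superlevel_V [simp]:
  "superV graph_V pos_V 0 = {0,1,2}" "superE graph_V pos_V 0 = {0,1}"
  "superV graph_V pos_V (Suc 0) = {1,2}" "superE graph_V pos_V (Suc 0) = {}"
  by (auto simp: superV_def superE_def hv_def pos_V_def)

lemma superlevel_U [simp]:
  "superV graph_U pos_U 0 = {0,1,2,3}" "superE graph_U pos_U 0 = {0,1,2}"
  "superV graph_U pos_U (Suc 0) = {2,3}" "superE graph_U pos_U (Suc 0) = {}"
  by (auto simp: superV_def superE_def hv_def pos_U_def)

lemma IC_graph_V [simp]:
  "IC_E graph_V pos_V 0 = {}" "IC_E graph_V pos_V (Suc 0) = {0,1}"
  "IC_V graph_V pos_V 0 = {0}" "IC_V graph_V pos_V (Suc 0) = {0,1,2}"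
proof -
  show E: "IC_E graph_V pos_V 0 = {}" "IC_E graph_V pos_V (Suc 0) = {0,1}"
    by (auto simp: IC_E_def he_def hv_def pos_V_def)
  have "{v \<in> gV graph_V. hv pos_V v = 0} = {0}" "{v \<in> gV graph_V. hv pos_V v = 1} = {1,2}"
    by (auto simp: hv_def pos_V_def)
  then show "IC_V graph_V pos_V 0 = {0}" "IC_V graph_V pos_V (Suc 0) = {0,1,2}"
    by (auto simp: IC_V_eq E)
qed

lemma IC_graph_U [simp]:
  "IC_E graph_U pos_U 0 = {0}" "IC_E graph_U pos_U (Suc 0) = {1,2}"
  "IC_V graph_U pos_U 0 = {0,1}" "IC_V graph_U pos_U (Suc 0) = {0,1,2,3}"
proof -
  show E: "IC_E graph_U pos_U 0 = {0}" "IC_E graph_U pos_U (Suc 0) = {1,2}"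
    by (auto simp: IC_E_def he_def hv_def pos_U_def)
  have "{v \<in> gV graph_U. hv pos_U v = 0} = {0,1}" "{v \<in> gV graph_U. hv pos_U v = 1} = {2,3}"
    by (auto simp: hv_def pos_U_def)
  then show "IC_V graph_U pos_U 0 = {0,1}" "IC_V graph_U pos_U (Suc 0) = {0,1,2,3}"
    by (auto simp: IC_V_eq E)
qed

lemma cell_lists_V:
  "gV (pgraph (EP_space graph_V pos_V t)) \<subseteq> set [0,1,2]"
  "gE (pgraph (EP_space graph_V pos_V t)) \<subseteq> set [0,1]"
  "gV (pgraph (FB_space graph_V pos_V t)) \<subseteq> set [None, Some 0, Some 1, Some 2]"
  "gE (pgraph (FB_space graph_V pos_V t)) \<subseteq> set [0,1]"
  using EP_space_subgraph[of graph_V pos_V t] FB_space_subgraph[of graph_V pos_V t] by simp_all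

lemma cell_lists_U:
  "gV (pgraph (EP_space graph_U pos_U t)) \<subseteq> set [0,1,2,3]"
  "gE (pgraph (EP_space graph_U pos_U t)) \<subseteq> set [0,1,2]"
  "gV (pgraph (FB_space graph_U pos_U t)) \<subseteq> set [None, Some 0, Some 1, Some 2, Some 3]"
  "gE (pgraph (FB_space graph_U pos_U t)) \<subseteq> set [0,1,2]"
  using EP_space_subgraph[of graph_U pos_U t] FB_space_subgraph[of graph_U pos_U t] by simp_all

lemmas hrank_eval_simps = EP_space_def EP_map_def FB_space_def FB_map_def FB_SV_def FB_SE_def
  lift_graph_def quot_graph_def qvert_def qedge_def list_rank_def delta_def
  chainmap0_def chainmap1_def bdry_def incid_def insert_Diff_if

lemma nat_le_3_cases:
  assumes "i \<le> j" "j \<le> (3::nat)"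
  obtains "i = 0" "j = 0" | "i = 0" "j = 1" | "i = 0" "j = 2" | "i = 0" "j = 3"
  | "i = 1" "j = 1" | "i = 1" "j = 2" | "i = 1" "j = 3" | "i = 2" "j = 2" | "i = 2" "j = 3"
  | "i = 3" "j = 3"
proof -
  have "j \<in> {0,1,2,3}" "i \<in> {0..j}"
    using assms by auto
  then show thesis
    using that by (auto simp: numeral_3_eq_3 numeral_2_eq_2 le_Suc_eq)
qed

lemma EP_hrank0:
  assumes "i \<le> j" "j \<le> 3"
  shows "hrank 0 (EP_space graph_V pos_V) (EP_map graph_V pos_V) i j = (if j \<le> 1 then 1 else 0)"
    and "hrank 0 (EP_space graph_U pos_U) (EP_map graph_U pos_U) i j = (if j \<le> 1 then 1 else 0)"
  unfolding hrank0_eq_list_rank[OF cell_lists_V(1,2)] hrank0_eq_list_rank[OF cell_lists_U(1,2)]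
  using assms by (cases rule: nat_le_3_cases; simp add: hrank_eval_simps)+

lemma EP_hrank1:
  assumes "i \<le> j" "j \<le> 3"
  shows "hrank 1 (EP_space graph_V pos_V) (EP_map graph_V pos_V) i j =
      (if i = 2 \<and> j = 2 then 1 else 0)"
    and "hrank 1 (EP_space graph_U pos_U) (EP_map graph_U pos_U) i j =
      (if i = 2 \<and> j = 2 then 1 else 0)"
  unfolding hrank1_eq_list_rank[OF cell_lists_V(1,2)] hrank1_eq_list_rank[OF cell_lists_U(1,2)]
  using assms by (cases rule: nat_le_3_cases; simp add: hrank_eval_simps)+

lemma FB_hrank1:
  assumes "i \<le> j" "j \<le> 3"
  shows "hrank 1 (FB_space graph_V pos_V) (FB_map graph_V pos_V) i j = 0"
    and "hrank 1 (FB_space graph_U pos_U) (FB_map graph_U pos_U) i j =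
      (if i = 2 \<and> j = 2 then 1 else 0)"
  unfolding hrank1_eq_list_rank[OF cell_lists_V(3,4)] hrank1_eq_list_rank[OF cell_lists_U(3,4)]
  using assms by (cases rule: nat_le_3_cases; simp add: hrank_eval_simps)+

lemma FB_diagram1_at_2_2:
  "FB_diagram 1 graph_V pos_V (2, 2) = 0" "FB_diagram 1 graph_U pos_U (2, 2) = 1"
  using FB_hrank1[of 2 2] FB_hrank1[of 1 2] FB_hrank1[of 2 3] FB_hrank1[of 1 3]
  by (simp_all add: FB_diagram_def pers_diagram_interior)

lemma EP_diagram_V_eq_U:
  assumes "k \<in> {0, 1}"
  shows "EP_diagram k graph_V pos_V = EP_diagram k graph_U pos_U"
  unfolding EP_diagram_def levels_V levels_U
proof (rule pers_diagram_cong)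
  fix i j :: nat
  assume "i \<le> j" "j \<le> 2 * 1 + 1"
  then have ij: "i \<le> j" "j \<le> 3"
    by simp_all
  show "hrank k (EP_space graph_V pos_V) (EP_map graph_V pos_V) i j
      = hrank k (EP_space graph_U pos_U) (EP_map graph_U pos_U) i j"
    using assms EP_hrank0[OF ij] EP_hrank1[OF ij] by auto
qed

theorem proposition5:
  shows "\<exists>(G :: (nat, nat) graph) posG arcsG (H :: (nat, nat) graph) posH arcsH.
           embedding G posG arcsG \<and> embedding H posH arcsH \<and>
           (\<exists>k\<in>{0,1}. FB_diagram k G posG \<noteq> FB_diagram k H posH) \<and>
           (\<forall>k\<in>{0,1}. EP_diagram k G posG = EP_diagram k H posH)"
proof (intro exI conjI)
  show "embedding graph_V pos_V (straight_arcs graph_V pos_V)"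
    by (rule embedding_V)
  show "embedding graph_U pos_U (straight_arcs graph_U pos_U)"
    by (rule embedding_U)
  have "FB_diagram 1 graph_V pos_V \<noteq> FB_diagram 1 graph_U pos_U"
    using FB_diagram1_at_2_2 by (metis zero_neq_one)
  then show "\<exists>k\<in>{0,1}. FB_diagram k graph_V pos_V \<noteq> FB_diagram k graph_U pos_U"
    by blast
  show "\<forall>k\<in>{0,1}. EP_diagram k graph_V pos_V = EP_diagram k graph_U pos_U"
    using EP_diagram_V_eq_U by blast
qed

end
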